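(* Let $(X,d)$ be a metric space with probability measure $\mu$, let $Y$ be a countable set and $f:X\to Y$. Let $\kappa:\mathbb{Z}^+\to\mathbb{Z}^+$ satisfy $\sum_{n=1}^\infty \rho^{\kappa(n)}=\infty$ for every $0<\rho\le 1$. Let $\{z_n\}_{n\ge1}$ be generated by the process $\mathcal{S}(\kappa,\Phi)$ with the distance-to-sample-set heuristic $\Phi(x,S)=d(x,S)=\inf\{d(x,s): s\in S\}$, and let $\zeta_n$ be the nearest neighbor prediction function on $Z_n$. If $x\in\operatorname{supp}(\mu)$ is not an $f$-boundary point, then $\zeta_n(x)\to f(x)$ as $n\to\infty$ with probability one.
   Context: Setting: $(X,d)$ is a metric space equipped with a probability measure $\mu$; $Y$ is a countable set; $f:X\to Y$ is the "true function". For $y\in Y$, $X_y=f^{-1}(y)$. $B_\epsilon(x)$ is the open ball of radius $\epsilon$ about $x$. The support $\operatorname{supp}(\mu)$ is the set of $x\in X$ with $\mu(B_\epsilon(x))>0$ for all $\epsilon>0$. A point $b\in X$ is an $f$-boundary point iff $\mu(B_\epsilon(b)\cap(X\setminus X_{f(b)}))>0$ for every $\epsilon>0$. The process $\mathcal{S}(\kappa,\Phi)$, for a function $\kappa:\mathbb{Z}^+\to\mathbb{Z}^+$ and a selection heuristic $\Phi:X\times\mathcal{P}(X)\to\mathbb{R}\cup\{+\infty\}$: set $Z_0=\emptyset$; for $n=1,2,\dots$, draw a set of $\kappa(n)$ candidates independently at random according to $\mu$ (independently of everything before), let $z_n$ be a candidate $s$ maximizing $\Phi(s,Z_{n-1})$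 (ties broken uniformly at random), and set $Z_n=\{z_1,\dots,z_n\}$. Nearest neighbor prediction: $\zeta_n(x)=f(z_\iota)$ where $\iota=\arg\min_{i\le n}d(x,z_i)$, ties broken uniformly at random. *)

theory Defs
  imports "HOL-Probability.Probability" "HOL-Combinatorics.Permutations"
begin

definition mu_support :: "'a::metric_space measure \<Rightarrow> 'a set" where
  "mu_support \<mu> = {x. \<forall>\<epsilon>>0. measure \<mu> (ball x \<epsilon>) > 0}"

definition f_boundary_point :: "'a::metric_space measure \<Rightarrow> ('a \<Rightarrow> 'b) \<Rightarrow> 'a \<Rightarrow> bool" where
  "f_boundary_point \<mu> f b \<longleftrightarrow>
     (\<forall>\<epsilon>>0. measure \<mu> (ball b \<epsilon> \<inter> (space \<mu> - f -` {f b})) > 0)"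

text \<open>Distance-to-sample-set heuristic d(x,S) = inf of d(x,s) over s in S, valued in the
  extended reals (the infimum over the empty set is +infinity).\<close>
definition dist_to_set :: "'a::metric_space \<Rightarrow> 'a set \<Rightarrow> ereal" where
  "dist_to_set x S = (INF s\<in>S. ereal (dist x s))"

text \<open>If p is a uniformly random
  permutation of I (independent of v), this is a uniformly random maximiser (minimiser).\<close>
definition tie_argmax :: "('i \<Rightarrow> 'v::linorder) \<Rightarrow> 'i set \<Rightarrow> ('i \<Rightarrow> nat) \<Rightarrow> 'i" where
  "tie_argmax v I p = arg_min_on p {i \<in> I. \<forall>j\<in>I. v j \<le> v i}"

definition tie_argmin :: "('i \<Rightarrow> 'v::linorder) \<Rightarrow> 'i set \<Rightarrow> ('i \<Rightarrow> nat) \<Rightarrow> 'i" where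
  "tie_argmin v I p = arg_min_on p {i \<in> I. \<forall>j\<in>I. v i \<le> v j}"

text \<open>The process S(kappa,Phi). c n i (i < kappa n) is the i-th candidate drawn at step n,
  p n is the tie-breaking permutation of the candidate indices at step n.
  sample_list kappa Phi c p n = [z_1, ..., z_n], so Z_n = set (sample_list ... n).\<close>
primrec sample_list ::
  "(nat \<Rightarrow> nat) \<Rightarrow> ('a \<Rightarrow> 'a set \<Rightarrow> ereal) \<Rightarrow> (nat \<Rightarrow> nat \<Rightarrow> 'a) \<Rightarrow> (nat \<Rightarrow> nat \<Rightarrow> nat) \<Rightarrow> nat \<Rightarrow> 'a list"
where
  "sample_list \<kappa> \<Phi> c p 0 = []"
| "sample_list \<kappa> \<Phi> c p (Suc n) =
     (let Z = sample_list \<kappa> \<Phi> c p n;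
          i = tie_argmax (\<lambda>i. \<Phi> (c (Suc n) i) (set Z)) {..<\<kappa> (Suc n)} (p (Suc n))
      in Z @ [c (Suc n) i])"

definition nn_predict :: "('a::metric_space \<Rightarrow> 'b) \<Rightarrow> 'a list \<Rightarrow> (nat \<Rightarrow> nat) \<Rightarrow> 'a \<Rightarrow> 'b" where
  "nn_predict f Zs q x = f (Zs ! tie_argmin (\<lambda>i. dist x (Zs ! i)) {..<length Zs} q)"

text \<open>The randomness used at step n: the kappa n candidates (i.i.d. mu), a uniformly random
  permutation of the candidate indices (tie-breaking in the selection) and a uniformly random
  permutation of {..<n} (tie-breaking in the nearest-neighbour prediction zeta_n).\<close>
definition step_measure ::
  "'a measure \<Rightarrow> (nat \<Rightarrow> nat) \<Rightarrow> nat \<Rightarrow> ((nat \<Rightarrow> 'a) \<times> (nat \<Rightarrow> nat) \<times> (nat \<Rightarrow> nat)) measure" where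
  "step_measure \<mu> \<kappa> n =
     (PiM {..<\<kappa> n} (\<lambda>_. \<mu>)) \<Otimes>\<^sub>M
       (measure_pmf (pmf_of_set {p. p permutes {..<\<kappa> n}}) \<Otimes>\<^sub>M
        measure_pmf (pmf_of_set {q. q permutes {..<n}}))"

end

theory Submission
  imports Defs
begin

text \<open>
  Choose \<open>\<epsilon> > 0\<close> such that almost every point of \<open>B = ball x \<epsilon>\<close> has label \<open>f x\<close>; the
  exceptional null set is almost surely never hit by any of the countably many candidates.
  Since \<open>\<mu>(B) = \<rho> > 0\<close>, all \<open>\<kappa>(n)\<close> candidates of step \<open>n\<close> lie in \<open>B\<close> with probability
  \<open>\<rho>^\<kappa>(n)\<close>, independently over \<open>n\<close>; as \<open>\<Sum> \<rho>^\<kappa>(n)\<close> diverges, almost surely some step has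
  this property, and then (whatever the heuristic) a point of \<open>B\<close> is added to the sample.
  From then on the nearest sample to \<open>x\<close> lies in \<open>B\<close>, is a candidate, and so carries
  the label \<open>f x\<close>.
\<close>

lemma tie_argmax_mem:
  fixes v :: "'i \<Rightarrow> 'v::linorder"
  assumes "finite I" "I \<noteq> {}"
  shows "tie_argmax v I p \<in> I"
proof -
  let ?S = "{i \<in> I. \<forall>j\<in>I. v j \<le> v i}"
  have "Max (v ` I) \<in> v ` I" using assms by simp
  then obtain i where "i \<in> I" "v i = Max (v ` I)" by auto
  hence "i \<in> ?S" using assms by auto
  hence "arg_min_on p ?S \<in> ?S" using assms by (intro arg_min_if_finite(1)) auto
  thus ?thesis unfolding tie_argmax_def by auto
qed

lemma tie_argmin_mem_le:
  fixes v :: "'i \<Rightarrow> 'v::linorder"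
  assumes "finite I" "I \<noteq> {}"
  shows "tie_argmin v I p \<in> I" and "\<And>j. j \<in> I \<Longrightarrow> v (tie_argmin v I p) \<le> v j"
proof -
  let ?S = "{i \<in> I. \<forall>j\<in>I. v i \<le> v j}"
  have "Min (v ` I) \<in> v ` I" using assms by simp
  then obtain i where "i \<in> I" "v i = Min (v ` I)" by auto
  hence "i \<in> ?S" using assms by auto
  hence "arg_min_on p ?S \<in> ?S" using assms by (intro arg_min_if_finite(1)) auto
  thus "tie_argmin v I p \<in> I" "\<And>j. j \<in> I \<Longrightarrow> v (tie_argmin v I p) \<le> v j"
    unfolding tie_argmin_def by auto
qed

lemma nn_predict_nearest:
  assumes "Zs \<noteq> []"
  obtains z where "z \<in> set Zs" "nn_predict f Zs q x = f z"
    "\<And>z'. z' \<in> set Zs \<Longrightarrow> dist x z \<le> dist x z'"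
proof
  let ?j = "tie_argmin (\<lambda>i. dist x (Zs ! i)) {..<length Zs} q"
  have "{..<length Zs} \<noteq> {}" using assms by auto
  note j = tie_argmin_mem_le[OF finite_lessThan this, where v = "\<lambda>i. dist x (Zs ! i)" and p = q]
  show "Zs ! ?j \<in> set Zs" using j(1) by simp
  show "nn_predict f Zs q x = f (Zs ! ?j)" unfolding nn_predict_def ..
  show "dist x (Zs ! ?j) \<le> dist x z'" if "z' \<in> set Zs" for z'
    using that j(2) by (auto simp: in_set_conv_nth)
qed

lemma sample_list_length: "length (sample_list \<kappa> \<Phi> c p n) = n"
  by (induction n) (auto simp: Let_def)

lemma sample_list_Suc_eq_append_candidate:
  assumes "\<kappa> (Suc n) \<ge> 1"
  obtains i where "i < \<kappa> (Suc n)"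
    "sample_list \<kappa> \<Phi> c p (Suc n) = sample_list \<kappa> \<Phi> c p n @ [c (Suc n) i]"
proof
  let ?i = "tie_argmax (\<lambda>i. \<Phi> (c (Suc n) i) (set (sample_list \<kappa> \<Phi> c p n)))
              {..<\<kappa> (Suc n)} (p (Suc n))"
  have "{..<\<kappa> (Suc n)} \<noteq> {}" using assms by (auto simp: lessThan_empty_iff)
  thus "?i < \<kappa> (Suc n)" using tie_argmax_mem[OF finite_lessThan] by blast
qed (simp add: Let_def)

lemma set_sample_list_mono:
  assumes "n \<le> m"
  shows "set (sample_list \<kappa> \<Phi> c p n) \<subseteq> set (sample_list \<kappa> \<Phi> c p m)"
  using assms by (induction rule: dec_induct) (auto simp: Let_def)

lemma set_sample_list_candidates:
  assumes "\<forall>k\<ge>1. \<kappa> k \<ge> 1" "z \<in> set (sample_list \<kappa> \<Phi> c p n)"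
  shows "\<exists>k i. 1 \<le> k \<and> i < \<kappa> k \<and> z = c k i"
  using assms(2)
proof (induction n)
  case (Suc n)
  have "\<kappa> (Suc n) \<ge> 1" using assms(1) by simp
  then obtain i where "i < \<kappa> (Suc n)"
    "sample_list \<kappa> \<Phi> c p (Suc n) = sample_list \<kappa> \<Phi> c p n @ [c (Suc n) i]"
    by (rule sample_list_Suc_eq_append_candidate)
  with Suc show ?case by auto
qed simp

lemma nn_predict_sample_list_eq:
  assumes kappa_pos: "\<forall>k\<ge>1. \<kappa> k \<ge> 1"
    and labels: "\<And>k i. 1 \<le> k \<Longrightarrow> i < \<kappa> k \<Longrightarrow> c k i \<in> ball x \<epsilon> \<Longrightarrow> f (c k i) = f x"
    and hit: "1 \<le> n" "\<And>i. i < \<kappa> n \<Longrightarrow> c n i \<in> ball x \<epsilon>"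
    and "n \<le> m"
  shows "nn_predict f (sample_list \<kappa> \<Phi> c p m) q x = f x"
proof -
  let ?Zs = "sample_list \<kappa> \<Phi> c p m"
  obtain n' where n': "n = Suc n'" using hit(1) by (cases n) auto
  then obtain i where "i < \<kappa> n" "sample_list \<kappa> \<Phi> c p n = sample_list \<kappa> \<Phi> c p n' @ [c n i]"
    using kappa_pos hit(1) sample_list_Suc_eq_append_candidate by metis
  hence "c n i \<in> set (sample_list \<kappa> \<Phi> c p n)" by simp
  hence z: "c n i \<in> set ?Zs" "c n i \<in> ball x \<epsilon>"
    using set_sample_list_mono[OF \<open>n \<le> m\<close>, of \<kappa> \<Phi> c p] hit(2) \<open>i < \<kappa> n\<close> by auto
  hence "?Zs \<noteq> []" by auto
  then obtain z0 where z0: "z0 \<in> set ?Zs" "nn_predict f ?Zs q x = f z0"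
    and nearest: "\<And>z'. z' \<in> set ?Zs \<Longrightarrow> dist x z0 \<le> dist x z'"
    using nn_predict_nearest by metis
  have "z0 \<in> ball x \<epsilon>" using nearest[OF z(1)] z(2) by simp
  moreover obtain k j where "1 \<le> k" "j < \<kappa> k" "z0 = c k j"
    using set_sample_list_candidates[OF kappa_pos z0(1)] by blast
  ultimately show ?thesis using labels z0(2) by simp
qed

lemma not_f_boundary_pointE:
  assumes "finite_measure \<mu>" "sets \<mu> = sets borel" "f -` {f x} \<in> sets \<mu>"
    and "\<not> f_boundary_point \<mu> f x"
  obtains \<epsilon> where "\<epsilon> > 0" "ball x \<epsilon> - f -` {f x} \<in> null_sets \<mu>"
proof -
  interpret finite_measure \<mu> by (rule assms(1))
  have space: "space \<mu> = UNIV" using sets_eq_imp_space_eq[OF assms(2)] by simp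
  obtain \<epsilon> where "\<epsilon> > 0" "measure \<mu> (ball x \<epsilon> - f -` {f x}) \<le> 0"
    using assms(4) unfolding f_boundary_point_def space by (auto simp: not_less Diff_eq)
  moreover have "ball x \<epsilon> - f -` {f x} \<in> sets \<mu>"
    using assms(2,3) by (intro sets.Diff) auto
  ultimately show thesis
    using measure_nonneg[of \<mu> "ball x \<epsilon> - f -` {f x}"]
    by (intro that) (auto simp: null_sets_def emeasure_eq_measure)
qed

lemma distr_fst_step_measure:
  "distr (step_measure \<mu> \<kappa> n) (PiM {..<\<kappa> n} (\<lambda>_. \<mu>)) fst = PiM {..<\<kappa> n} (\<lambda>_. \<mu>)"
proof -
  interpret tie_breaking: prob_space "measure_pmf (pmf_of_set {p. p permutes {..<\<kappa> n}}) \<Otimes>\<^sub>M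
      measure_pmf (pmf_of_set {q. q permutes {..<n}})"
    by (intro prob_space_pair prob_space_measure_pmf)
  show ?thesis unfolding step_measure_def by (rule tie_breaking.distr_pair_fst)
qed

lemma measure_PiM_PiE_const:
  assumes "prob_space \<mu>" "finite I" "B \<in> sets \<mu>"
  shows "measure (PiM I (\<lambda>_. \<mu>)) (Pi\<^sub>E I (\<lambda>_. B)) = measure \<mu> B ^ card I"
proof -
  interpret finite_product_prob_space "\<lambda>_. \<mu>" I
    using assms
    by (intro finite_product_prob_space.intro finite_product_sigma_finite.intro
        finite_product_sigma_finite_axioms.intro product_prob_space.intro
        product_prob_space_axioms.intro product_sigma_finite.intro prob_space_imp_sigma_finite)
  show ?thesis using assms(3) by (simp add: finite_measure_PiM_emb)
qed

context prob_space
begin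

lemma distr_candidates:
  assumes W: "W \<in> measurable M (step_measure \<mu> \<kappa> n)"
    and W_distr: "distr M (step_measure \<mu> \<kappa> n) W = step_measure \<mu> \<kappa> n"
  shows "distr M (PiM {..<\<kappa> n} (\<lambda>_. \<mu>)) (\<lambda>\<omega>. fst (W \<omega>)) = PiM {..<\<kappa> n} (\<lambda>_. \<mu>)"
proof -
  have "distr M (PiM {..<\<kappa> n} (\<lambda>_. \<mu>)) (\<lambda>\<omega>. fst (W \<omega>))
      = distr (distr M (step_measure \<mu> \<kappa> n) W) (PiM {..<\<kappa> n} (\<lambda>_. \<mu>)) fst"
    using W by (subst distr_distr) (auto simp: step_measure_def comp_def)
  also have "\<dots> = PiM {..<\<kappa> n} (\<lambda>_. \<mu>)"
    unfolding W_distr by (rule distr_fst_step_measure)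
  finally show ?thesis .
qed

lemma AE_candidate_notin_null_set:
  assumes "prob_space \<mu>"
    and W: "W \<in> measurable M (step_measure \<mu> \<kappa> n)"
    and W_distr: "distr M (step_measure \<mu> \<kappa> n) W = step_measure \<mu> \<kappa> n"
    and "N \<in> null_sets \<mu>" "i < \<kappa> n"
  shows "AE \<omega> in M. fst (W \<omega>) i \<notin> N"
proof -
  have cands: "(\<lambda>\<omega>. fst (W \<omega>)) \<in> measurable M (PiM {..<\<kappa> n} (\<lambda>_. \<mu>))"
    using W unfolding step_measure_def by measurable
  have "distr M \<mu> (\<lambda>\<omega>. fst (W \<omega>) i)
      = distr (distr M (PiM {..<\<kappa> n} (\<lambda>_. \<mu>)) (\<lambda>\<omega>. fst (W \<omega>))) \<mu> (\<lambda>g. g i)"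
    using cands \<open>i < \<kappa> n\<close> by (subst distr_distr) (auto simp: comp_def)
  also have "\<dots> = \<mu>"
    unfolding distr_candidates[OF W W_distr]
    using assms(1) \<open>i < \<kappa> n\<close> by (intro distr_PiM_component) auto
  finally have "AE y in distr M \<mu> (\<lambda>\<omega>. fst (W \<omega>) i). y \<notin> N"
    using AE_not_in[OF \<open>N \<in> null_sets \<mu>\<close>] by (rule ssubst)
  thus ?thesis
    by (rule AE_distrD[rotated]) (use cands \<open>i < \<kappa> n\<close> in auto)
qed

lemma prob_candidates_in:
  assumes "prob_space \<mu>"
    and W: "W \<in> measurable M (step_measure \<mu> \<kappa> n)"
    and W_distr: "distr M (step_measure \<mu> \<kappa> n) W = step_measure \<mu> \<kappa> n"
    and B: "B \<in> sets \<mu>"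
  shows "prob {\<omega> \<in> space M. \<forall>i<\<kappa> n. fst (W \<omega>) i \<in> B} = measure \<mu> B ^ \<kappa> n"
proof -
  have cands: "(\<lambda>\<omega>. fst (W \<omega>)) \<in> measurable M (PiM {..<\<kappa> n} (\<lambda>_. \<mu>))"
    using W unfolding step_measure_def by measurable
  have box: "Pi\<^sub>E {..<\<kappa> n} (\<lambda>_. B) \<in> sets (PiM {..<\<kappa> n} (\<lambda>_. \<mu>))"
    using B by (intro sets_PiM_I_finite) auto
  have "{\<omega> \<in> space M. \<forall>i<\<kappa> n. fst (W \<omega>) i \<in> B}
      = (\<lambda>\<omega>. fst (W \<omega>)) -` Pi\<^sub>E {..<\<kappa> n} (\<lambda>_. B) \<inter> space M"
  proof -
    have "fst (W \<omega>) \<in> extensional {..<\<kappa> n}" if "\<omega> \<in> space M" for \<omega>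
      using measurable_space[OF cands that] by (simp add: space_PiM PiE_def)
    thus ?thesis by (auto simp: PiE_iff)
  qed
  hence "prob {\<omega> \<in> space M. \<forall>i<\<kappa> n. fst (W \<omega>) i \<in> B}
      = measure (distr M (PiM {..<\<kappa> n} (\<lambda>_. \<mu>)) (\<lambda>\<omega>. fst (W \<omega>))) (Pi\<^sub>E {..<\<kappa> n} (\<lambda>_. B))"
    using measure_distr[OF cands box] by simp
  also have "\<dots> = measure \<mu> B ^ \<kappa> n"
    unfolding distr_candidates[OF W W_distr] using assms(1) B by (simp add: measure_PiM_PiE_const)
  finally show ?thesis .
qed

lemma prob_INT_indep_events_eq_0:
  assumes indep: "indep_events E {1..}"
    and diverges: "\<not> summable (\<lambda>n. 1 - prob (E (Suc n)))"
  shows "prob (\<Inter>n\<in>{1..}. E n) = 0"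
proof (rule ccontr)
  let ?G = "\<Inter>n\<in>{1..}. E n"
  let ?S = "\<lambda>N. \<Sum>n<N. 1 - prob (E (Suc n))"
  have E_sets: "E n \<in> events" if "1 \<le> n" for n
    using indep that unfolding indep_events_def by auto
  assume "prob ?G \<noteq> 0"
  hence pos: "0 < prob ?G" using measure_nonneg[of M ?G] by linarith
  obtain N where N: "- ln (prob ?G) < ?S N"
  proof (rule ccontr)
    assume "\<not> thesis"
    hence "?S N \<le> - ln (prob ?G)" for N using that by (meson not_less)
    hence "summable (\<lambda>n. 1 - prob (E (Suc n)))"
      by (intro summableI_nonneg_bounded) auto
    with diverges show False ..
  qed
  have "0 \<le> - ln (prob ?G)" using pos by simp
  with N have "1 \<le> N" by (cases N) auto
  have "prob ?G \<le> prob (\<Inter>n\<in>{1..N}. E n)"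
    using E_sets \<open>1 \<le> N\<close> by (intro finite_measure_mono) auto
  also have "\<dots> = (\<Prod>n\<in>{1..N}. prob (E n))"
    using indep \<open>1 \<le> N\<close> unfolding indep_events_def by auto
  also have "\<dots> \<le> (\<Prod>n\<in>{1..N}. exp (- (1 - prob (E n))))"
  proof (rule prod_mono)
    fix n
    show "0 \<le> prob (E n) \<and> prob (E n) \<le> exp (- (1 - prob (E n)))"
      using exp_ge_add_one_self[of "prob (E n) - 1"] by simp
  qed
  also have "\<dots> = exp (\<Sum>n\<in>{1..N}. - (1 - prob (E n)))"
    by (rule exp_sum[OF finite_atLeastAtMost, symmetric])
  also have "\<dots> = exp (- ?S N)"
    by (simp only: sum_negf sum_bounds_lt_plus1[symmetric])
  also have "\<dots> < exp (ln (prob ?G))" using N by simp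
  finally show False using pos by simp
qed

lemma AE_ex_step_all_candidates_in:
  assumes "prob_space \<mu>"
    and W_indep: "indep_vars (step_measure \<mu> \<kappa>) W {1..}"
    and W_distr: "\<forall>n\<ge>1. distr M (step_measure \<mu> \<kappa> n) (W n) = step_measure \<mu> \<kappa> n"
    and B: "B \<in> sets \<mu>" "0 < measure \<mu> B"
    and kappa_div: "\<forall>\<rho>::real. 0 < \<rho> \<and> \<rho> \<le> 1 \<longrightarrow> \<not> summable (\<lambda>n. \<rho> ^ \<kappa> (Suc n))"
  shows "AE \<omega> in M. \<exists>n\<ge>1. \<forall>i<\<kappa> n. fst (W n \<omega>) i \<in> B"
proof -
  define E where "E n = {\<omega> \<in> space M. \<not> (\<forall>i<\<kappa> n. fst (W n \<omega>) i \<in> B)}" for n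
  have W: "W n \<in> measurable M (step_measure \<mu> \<kappa> n)" if "1 \<le> n" for n
    using W_indep that unfolding indep_vars_def by auto
  note [measurable] = B(1)
  have "Measurable.pred (step_measure \<mu> \<kappa> n) (\<lambda>w. \<not> (\<forall>i<\<kappa> n. fst w i \<in> B))" for n
    unfolding step_measure_def by measurable
  hence indep: "indep_events E {1..}"
    unfolding E_def pred_def using W_indep by (intro indep_eventsI_indep_vars)
  have E_sets: "E n \<in> events" if "1 \<le> n" for n
    using indep that unfolding indep_events_def by auto
  have "prob (E n) = 1 - measure \<mu> B ^ \<kappa> n" if "1 \<le> n" for n
  proof -
    let ?good = "{\<omega> \<in> space M. \<forall>i<\<kappa> n. fst (W n \<omega>) i \<in> B}"
    have "?good = space M - E n" unfolding E_def by auto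
    hence good: "?good \<in> events" using E_sets[OF that] by auto
    have "E n = space M - ?good" unfolding E_def by auto
    hence "prob (E n) = 1 - prob ?good" using prob_compl[OF good] by simp
    also have "prob ?good = measure \<mu> B ^ \<kappa> n"
      using W_distr that by (intro prob_candidates_in[OF assms(1) W[OF that] _ B(1)]) simp
    finally show ?thesis .
  qed
  moreover have "measure \<mu> B \<le> 1"
    using prob_space.prob_le_1[OF assms(1)] by simp
  ultimately have "\<not> summable (\<lambda>n. 1 - prob (E (Suc n)))"
    using kappa_div B(2) by simp
  with indep have "prob (\<Inter>n\<in>{1..}. E n) = 0"
    by (rule prob_INT_indep_events_eq_0)
  moreover have "(\<Inter>n\<in>{1..}. E n) \<in> events"
    using E_sets by (intro sets.countable_INT) auto
  ultimately have "AE \<omega> in M. \<omega> \<notin> (\<Inter>n\<in>{1..}. E n)"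
    by (intro AE_not_in) (simp add: emeasure_eq_measure null_sets_def)
  thus ?thesis using AE_space by eventually_elim (auto simp: E_def)
qed

end

theorem theorem1:
  fixes \<mu> :: "'a::metric_space measure"
    and Y :: "'b set"
    and f :: "'a \<Rightarrow> 'b"
    and \<kappa> :: "nat \<Rightarrow> nat"
    and M :: "'w measure"
    and W :: "nat \<Rightarrow> 'w \<Rightarrow> (nat \<Rightarrow> 'a) \<times> (nat \<Rightarrow> nat) \<times> (nat \<Rightarrow> nat)"
    and x :: 'a
  assumes mu_prob: "prob_space \<mu>"
    and mu_borel: "sets \<mu> = sets borel"
    and Y_countable: "countable Y"
    and f_into: "\<forall>a. f a \<in> Y"
    and f_meas: "\<forall>y\<in>Y. f -` {y} \<in> sets \<mu>"
    and kappa_pos: "\<forall>n\<ge>1. \<kappa> n \<ge> 1"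
    and kappa_div: "\<forall>\<rho>::real. 0 < \<rho> \<and> \<rho> \<le> 1 \<longrightarrow> \<not> summable (\<lambda>n. \<rho> ^ \<kappa> (Suc n))"
    and M_prob: "prob_space M"
    and W_indep: "prob_space.indep_vars M (step_measure \<mu> \<kappa>) W {1..}"
    and W_distr: "\<forall>n\<ge>1. distr M (step_measure \<mu> \<kappa> n) (W n) = step_measure \<mu> \<kappa> n"
    and x_supp: "x \<in> mu_support \<mu>"
    and x_nonbdry: "\<not> f_boundary_point \<mu> f x"
  shows "AE \<omega> in M. eventually (\<lambda>n.
           nn_predict f
             (sample_list \<kappa> dist_to_set (\<lambda>m. fst (W m \<omega>)) (\<lambda>m. fst (snd (W m \<omega>))) n)
             (snd (snd (W n \<omega>))) x = f x) sequentially"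
proof -
  interpret M: prob_space M by (rule M_prob)
  have "f -` {f x} \<in> sets \<mu>" using f_meas f_into by blast
  then obtain \<epsilon> where "\<epsilon> > 0" and mislabelled: "ball x \<epsilon> - f -` {f x} \<in> null_sets \<mu>"
    using mu_prob mu_borel x_nonbdry not_f_boundary_pointE by (metis prob_space.finite_measure)
  have W: "W n \<in> measurable M (step_measure \<mu> \<kappa> n)" if "1 \<le> n" for n
    using W_indep that unfolding M.indep_vars_def by auto
  have "AE \<omega> in M. fst (W k \<omega>) i \<notin> ball x \<epsilon> - f -` {f x}" if "1 \<le> k" "i < \<kappa> k" for k i
    using W_distr that
    by (intro M.AE_candidate_notin_null_set[OF mu_prob W[OF that(1)] _ mislabelled]) auto
  hence "AE \<omega> in M. \<forall>k\<in>{1..}. \<forall>i\<in>{..<\<kappa> k}. fst (W k \<omega>) i \<notin> ball x \<epsilon> - f -` {f x}"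
    by (intro AE_ball_countable') auto
  moreover have "AE \<omega> in M. \<exists>n\<ge>1. \<forall>i<\<kappa> n. fst (W n \<omega>) i \<in> ball x \<epsilon>"
    using \<open>\<epsilon> > 0\<close> x_supp mu_prob W_indep W_distr kappa_div mu_borel
    by (intro M.AE_ex_step_all_candidates_in) (auto simp: mu_support_def)
  ultimately show ?thesis
  proof eventually_elim
    case (elim \<omega>)
    then obtain n where "1 \<le> n" "\<forall>i<\<kappa> n. fst (W n \<omega>) i \<in> ball x \<epsilon>" by auto
    with elim kappa_pos show ?case
      by (intro eventually_sequentiallyI[of n] nn_predict_sample_list_eq[where \<epsilon> = \<epsilon>]) auto
  qed
qed

end
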